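(* Let $D=((a_n),(b_n))$ be an almost periodic divisor with a regular indexing. Then for every sequence $(h_k)\subset\mathbb{C}$ there exist a subsequence $(h'_k)$, a divisor $\widetilde D=((\tilde a_n),(\tilde b_n))$ which is almost periodic with a regular indexing, and bijections $\tilde\sigma(k,\cdot):\mathbb{N}\to\mathbb{N}$ such that $$\sup_n|a_{\tilde\sigma(k,n)}+h'_k-\tilde a_n|\to0,\qquad \sup_n|b_{\tilde\sigma(k,n)}+h'_k-\tilde b_n|\to0\qquad (k\to\infty).$$
   Context: A divisor $D=((a_n)_{n\in\mathbb{N}},(b_n)_{n\in\mathbb{N}})$ consists of two sequences in $\mathbb{C}$ without finite accumulation points. It is almost periodic with a regular indexing if for every $\varepsilon>0$ there is $L$ such that every disc of radius $L$ contains a point $\tau$ for which some bijection $\sigma:\mathbb{N}\to\mathbb{N}$ satisfies $|a_n+\tau-a_{\sigma(n)}|<\varepsilon$ and $|b_n+\tau-b_{\sigma(n)}|<\varepsilon$ for all $n$. *)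

theory Defs
  imports "HOL-Analysis.Analysis"
begin

definition no_finite_acc :: "(nat \<Rightarrow> complex) \<Rightarrow> bool" where
  "no_finite_acc a \<longleftrightarrow> (\<forall>r::real. finite {n. cmod (a n) \<le> r})"

definition divisor :: "(nat \<Rightarrow> complex) \<Rightarrow> (nat \<Rightarrow> complex) \<Rightarrow> bool" where
  "divisor a b \<longleftrightarrow> no_finite_acc a \<and> no_finite_acc b"

definition ap_regular_divisor :: "(nat \<Rightarrow> complex) \<Rightarrow> (nat \<Rightarrow> complex) \<Rightarrow> bool" where
  "ap_regular_divisor a b \<longleftrightarrow> divisor a b \<and>
    (\<forall>\<epsilon>>0. \<exists>L. \<forall>c::complex. \<exists>\<tau>. dist \<tau> c < L \<and>
       (\<exists>\<sigma>::nat \<Rightarrow> nat. bij \<sigma> \<and>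
          (\<forall>n. cmod (a n + \<tau> - a (\<sigma> n)) < \<epsilon> \<and> cmod (b n + \<tau> - b (\<sigma> n)) < \<epsilon>)))"

end

theory Submission
  imports Defs
begin

text \<open>
  We measure the distance between pairs of sequences up to reindexing: \<open>close \<epsilon> a b c d\<close>
  says that some bijection \<open>\<alpha>\<close> brings \<open>a \<circ> \<alpha>, b \<circ> \<alpha>\<close> uniformly within \<open>\<epsilon>\<close> of \<open>c, d\<close>.  This
  relation is symmetric, satisfies the triangle inequality and commutes with translations, and
  almost periodicity says exactly that \<open>D\<close> is close to its translates by relatively dense
  sets of vectors \<open>\<tau>\<close>.  The theorem is then the sequential compactness of the set of translates
  \<open>D + h\<close> with respect to this pseudo-distance, proved in the usual way:
  (A) the translates are totally bounded (every translate is near a translate by a bounded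
      vector), so (B) by compactness of discs every sequence of translates has a subsequence
      which is Cauchy up to reindexing;
  (C) Cauchy sequences converge up to reindexing, via a chain of bijections along a
      geometrically fast subsequence;
  (D) a limit of translates of \<open>D\<close> is again an almost periodic divisor with regular indexing.
  Finally the reindexing bijections are chosen independently of \<open>\<epsilon>\<close>.
\<close>

definition shift :: "(nat \<Rightarrow> complex) \<Rightarrow> complex \<Rightarrow> nat \<Rightarrow> complex" where
  "shift a t = (\<lambda>n. a n + t)"

lemma shift_apply [simp]: "shift a t n = a n + t"
  by (simp add: shift_def)

definition close :: "real \<Rightarrow> (nat \<Rightarrow> complex) \<Rightarrow> (nat \<Rightarrow> complex) \<Rightarrow>
    (nat \<Rightarrow> complex) \<Rightarrow> (nat \<Rightarrow> complex) \<Rightarrow> bool" where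
  "close \<epsilon> a b c d \<longleftrightarrow>
     (\<exists>\<alpha>. bij \<alpha> \<and> (\<forall>n. cmod (a (\<alpha> n) - c n) \<le> \<epsilon> \<and> cmod (b (\<alpha> n) - d n) \<le> \<epsilon>))"

lemma close_mono: "close \<epsilon> a b c d \<Longrightarrow> \<epsilon> \<le> \<delta> \<Longrightarrow> close \<delta> a b c d"
  unfolding close_def by (meson order_trans)

lemma close_sym:
  assumes "close \<epsilon> a b c d"
  shows "close \<epsilon> c d a b"
proof -
  obtain \<alpha> where \<alpha>: "bij \<alpha>" "\<And>m. cmod (a (\<alpha> m) - c m) \<le> \<epsilon> \<and> cmod (b (\<alpha> m) - d m) \<le> \<epsilon>"
    using assms unfolding close_def by blast
  have "cmod (c (inv \<alpha> n) - a n) \<le> \<epsilon> \<and> cmod (d (inv \<alpha> n) - b n) \<le> \<epsilon>" for n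
    using \<alpha>(2)[of "inv \<alpha> n"] \<alpha>(1) by (simp add: bij_is_surj surj_f_inv_f norm_minus_commute)
  thus ?thesis unfolding close_def using \<alpha>(1) bij_imp_bij_inv by blast
qed

lemma close_trans:
  assumes "close \<epsilon> a b c d" "close \<delta> c d e f"
  shows "close (\<epsilon> + \<delta>) a b e f"
proof -
  obtain \<alpha> where \<alpha>: "bij \<alpha>" "\<And>m. cmod (a (\<alpha> m) - c m) \<le> \<epsilon> \<and> cmod (b (\<alpha> m) - d m) \<le> \<epsilon>"
    using assms(1) unfolding close_def by blast
  obtain \<beta> where \<beta>: "bij \<beta>" "\<And>n. cmod (c (\<beta> n) - e n) \<le> \<delta> \<and> cmod (d (\<beta> n) - f n) \<le> \<delta>"
    using assms(2) unfolding close_def by blast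
  have "cmod (a (\<alpha> (\<beta> n)) - e n) \<le> \<epsilon> + \<delta> \<and> cmod (b (\<alpha> (\<beta> n)) - f n) \<le> \<epsilon> + \<delta>" for n
    using \<alpha>(2)[of "\<beta> n"] \<beta>(2)[of n] norm_diff_triangle_le by blast
  thus ?thesis unfolding close_def using bij_comp[OF \<beta>(1) \<alpha>(1)] by (auto simp: o_def)
qed

lemma shift_shift [simp]: "shift (shift a s) t = shift a (s + t)"
  by (simp add: shift_def add.assoc)

lemma close_shift:
  "close \<epsilon> a b c d \<Longrightarrow> close \<epsilon> (shift a t) (shift b t) (shift c t) (shift d t)"
  unfolding close_def by simp

lemma close_shift_shift:
  "cmod (s - t) \<le> \<epsilon> \<Longrightarrow> close \<epsilon> (shift a s) (shift b s) (shift a t) (shift b t)"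
  unfolding close_def by (intro exI[of _ id]) simp

text \<open>The strict inequalities
  of the definition can be relaxed since \<open>\<epsilon>\<close> is arbitrary.\<close>
lemma ap_regular_divisor_close:
  "ap_regular_divisor a b \<longleftrightarrow> divisor a b \<and>
     (\<forall>\<epsilon>>0. \<exists>L. \<forall>z. \<exists>\<tau>. dist \<tau> z < L \<and> close \<epsilon> a b (shift a \<tau>) (shift b \<tau>))"
proof -
  define P where "P \<epsilon> \<tau> \<sigma> \<longleftrightarrow> bij \<sigma> \<and>
      (\<forall>n. cmod (a n + \<tau> - a (\<sigma> n)) < \<epsilon> \<and> cmod (b n + \<tau> - b (\<sigma> n)) < \<epsilon>)"
    for \<epsilon> \<tau> and \<sigma> :: "nat \<Rightarrow> nat"
  have close_iff: "close \<epsilon> a b (shift a \<tau>) (shift b \<tau>) \<longleftrightarrow> (\<exists>\<sigma>. bij \<sigma> \<and>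
      (\<forall>n. cmod (a n + \<tau> - a (\<sigma> n)) \<le> \<epsilon> \<and> cmod (b n + \<tau> - b (\<sigma> n)) \<le> \<epsilon>))" for \<epsilon> \<tau>
    unfolding close_def by (simp add: norm_minus_commute)
  have strict_to_close: "P \<epsilon> \<tau> \<sigma> \<Longrightarrow> close \<epsilon> a b (shift a \<tau>) (shift b \<tau>)" for \<epsilon> \<tau> \<sigma>
    unfolding close_iff P_def by (meson less_imp_le)
  have close_to_strict: "\<exists>\<sigma>. P \<epsilon> \<tau> \<sigma>"
    if close_half: "close (\<epsilon>/2) a b (shift a \<tau>) (shift b \<tau>)" and pos: "\<epsilon> > 0" for \<epsilon> \<tau>
  proof -
    obtain \<sigma> where "bij \<sigma>"
      "\<forall>n. cmod (a n + \<tau> - a (\<sigma> n)) \<le> \<epsilon>/2 \<and> cmod (b n + \<tau> - b (\<sigma> n)) \<le> \<epsilon>/2"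
      using close_half unfolding close_iff by blast
    moreover have "\<epsilon>/2 < \<epsilon>" using pos by simp
    ultimately show ?thesis unfolding P_def by (meson le_less_trans)
  qed
  have "(\<forall>\<epsilon>>0. \<exists>L. \<forall>z. \<exists>\<tau>. dist \<tau> z < L \<and> (\<exists>\<sigma>. P \<epsilon> \<tau> \<sigma>)) \<longleftrightarrow>
        (\<forall>\<epsilon>>0. \<exists>L. \<forall>z. \<exists>\<tau>. dist \<tau> z < L \<and> close \<epsilon> a b (shift a \<tau>) (shift b \<tau>))"
    using strict_to_close close_to_strict by (meson half_gt_zero)
  thus ?thesis unfolding ap_regular_divisor_def P_def by blast
qed

lemma no_finite_acc_perturb:
  assumes "no_finite_acc a" "inj \<alpha>" "\<And>n. cmod (a (\<alpha> n) - c n) \<le> C"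
  shows "no_finite_acc c"
  unfolding no_finite_acc_def
proof
  fix R :: real
  have "{n. cmod (c n) \<le> R} \<subseteq> \<alpha> -` {p. cmod (a p) \<le> R + C}"
  proof
    fix n assume "n \<in> {n. cmod (c n) \<le> R}"
    moreover have "cmod (a (\<alpha> n)) \<le> cmod (c n) + cmod (a (\<alpha> n) - c n)"
      by (rule norm_triangle_sub)
    ultimately show "n \<in> \<alpha> -` {p. cmod (a p) \<le> R + C}" using assms(3)[of n] by simp
  qed
  moreover have "finite (\<alpha> -` {p. cmod (a p) \<le> R + C})"
    using assms(1,2) unfolding no_finite_acc_def by (intro finite_vimageI) auto
  ultimately show "finite {n. cmod (c n) \<le> R}" by (rule finite_subset)
qed

lemma divisor_close_shift:
  assumes "divisor a b" "close \<epsilon> (shift a t) (shift b t) c d"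
  shows "divisor c d"
proof -
  obtain \<alpha> where \<alpha>: "bij \<alpha>"
    "\<And>n. cmod (a (\<alpha> n) + t - c n) \<le> \<epsilon> \<and> cmod (b (\<alpha> n) + t - d n) \<le> \<epsilon>"
    using assms(2) unfolding close_def by auto
  have "cmod (f (\<alpha> n) - g n) \<le> \<epsilon> + cmod t" if "cmod (f (\<alpha> n) + t - g n) \<le> \<epsilon>"
    for f g :: "nat \<Rightarrow> complex" and n
    using norm_triangle_ineq4[of "f (\<alpha> n) + t - g n" t] that by simp
  thus ?thesis using assms(1) \<alpha> bij_is_inj no_finite_acc_perturb unfolding divisor_def by meson
qed

lemma translates_totally_bounded:
  assumes "ap_regular_divisor a b" "\<epsilon> > 0"
  shows "\<exists>L. \<forall>t. \<exists>s. cmod s \<le> L \<and> close \<epsilon> (shift a s) (shift b s) (shift a t) (shift b t)"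
proof -
  obtain L where L: "\<And>z. \<exists>\<tau>. dist \<tau> z < L \<and> close \<epsilon> a b (shift a \<tau>) (shift b \<tau>)"
    using assms unfolding ap_regular_divisor_close by blast
  have "\<exists>s. cmod s \<le> L \<and> close \<epsilon> (shift a s) (shift b s) (shift a t) (shift b t)" for t
  proof -
    obtain \<tau> where \<tau>: "dist \<tau> t < L" "close \<epsilon> a b (shift a \<tau>) (shift b \<tau>)"
      using L by blast
    have "cmod (t - \<tau>) \<le> L" using \<tau>(1) by (simp add: dist_norm norm_minus_commute)
    moreover have "close \<epsilon> (shift a (t - \<tau>)) (shift b (t - \<tau>)) (shift a t) (shift b t)"
      using close_shift[OF \<tau>(2), of "t - \<tau>"] by simp
    ultimately show ?thesis by blast
  qed
  thus ?thesis by blast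
qed

text \<open>Compactness of \<open>\<Prod>\<^sub>m cball 0 (L m)\<close> (Tychonoff): a sequence of complex sequences,
  bounded coordinatewise, has a subsequence converging in every coordinate.\<close>
lemma pointwise_convergent_subseq:
  fixes s :: "nat \<Rightarrow> nat \<Rightarrow> complex" and L :: "nat \<Rightarrow> real"
  assumes "\<And>k m. cmod (s k m) \<le> L m"
  shows "\<exists>r S. strict_mono r \<and> (\<forall>m. (\<lambda>k. s (r k) m) \<longlonglongrightarrow> S m)"
proof -
  define K where "K = PiE UNIV (\<lambda>m. cball (0::complex) (L m))"
  have "compactin (product_topology (\<lambda>i. euclidean) UNIV) K"
    unfolding K_def by (subst compactin_PiE) auto
  hence "seq_compact K" by (simp add: euclidean_product_topology compact_imp_seq_compact)
  moreover have "\<And>k. s k \<in> K" using assms unfolding K_def by (auto simp: dist_norm)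
  ultimately obtain S r where "strict_mono r" and lim: "(s \<circ> r) \<longlonglongrightarrow> S"
    by (metis seq_compactE)
  have "(\<lambda>k. s (r k) m) \<longlonglongrightarrow> S m" for m
  proof -
    have "isCont (\<lambda>x::nat\<Rightarrow>complex. x m) S"
      using continuous_on_product_coordinates[of m] continuous_on_eq_continuous_at by blast
    from isCont_tendsto_compose[OF this lim] show ?thesis by (simp add: o_def)
  qed
  thus ?thesis using \<open>strict_mono r\<close> by blast
qed

text \<open>For each precision \<open>1/(m+1)\<close> replace the translate by \<open>h k\<close> with a nearby translate by a
  bounded vector \<open>s m (h k)\<close>; a subsequence along which all these bounded vectors converge
  does the job.\<close>
lemma translates_cauchy_subseq:
  fixes h :: "nat \<Rightarrow> complex"
  assumes "ap_regular_divisor a b"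
  shows "\<exists>r::nat \<Rightarrow> nat. strict_mono r \<and> (\<forall>\<epsilon>>0. \<exists>N. \<forall>k\<ge>N. \<forall>l\<ge>N.
     close \<epsilon> (shift a (h (r k))) (shift b (h (r k))) (shift a (h (r l))) (shift b (h (r l))))"
proof -
  define e where "e m = inverse (real (Suc m))" for m
  have "\<forall>m. \<exists>L. \<forall>t. \<exists>s. cmod s \<le> L \<and> close (e m) (shift a s) (shift b s) (shift a t) (shift b t)"
    using translates_totally_bounded[OF assms] unfolding e_def by simp
  then obtain L where "\<And>m t. \<exists>s. cmod s \<le> L m \<and>
      close (e m) (shift a s) (shift b s) (shift a t) (shift b t)"
    by metis
  then obtain s where s_bound: "\<And>m t. cmod (s m t) \<le> L m"
    and s_close: "\<And>m t. close (e m) (shift a (s m t)) (shift b (s m t)) (shift a t) (shift b t)"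
    by metis
  obtain r S where r: "strict_mono r" and lim: "\<And>m. (\<lambda>k. s m (h (r k))) \<longlonglongrightarrow> S m"
    using pointwise_convergent_subseq[of "\<lambda>k m. s m (h k)" L] s_bound by blast
  have "\<exists>N. \<forall>k\<ge>N. \<forall>l\<ge>N.
     close \<epsilon> (shift a (h (r k))) (shift b (h (r k))) (shift a (h (r l))) (shift b (h (r l)))"
    if pos: "\<epsilon> > 0" for \<epsilon>
  proof -
    obtain m where m: "e m < \<epsilon>/3"
      using reals_Archimedean[of "\<epsilon>/3"] pos unfolding e_def by auto
    obtain N where N: "\<And>k l. k \<ge> N \<Longrightarrow> l \<ge> N \<Longrightarrow> cmod (s m (h (r k)) - s m (h (r l))) < e m"
      using CauchyD[OF LIMSEQ_imp_Cauchy[OF lim[of m]], of "e m"] unfolding e_def by auto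
    have "close \<epsilon> (shift a (h (r k))) (shift b (h (r k))) (shift a (h (r l))) (shift b (h (r l)))"
      if "k \<ge> N" "l \<ge> N" for k l
    proof -
      text \<open>Pass through the two bounded translates by \<open>s m (h (r k))\<close> and \<open>s m (h (r l))\<close>.\<close>
      have "close (e m + e m + e m) (shift a (h (r k))) (shift b (h (r k)))
          (shift a (h (r l))) (shift b (h (r l)))"
        using close_sym[OF s_close] close_shift_shift[OF less_imp_le[OF N[OF that]]] s_close
        by (meson close_trans)
      thus ?thesis using m by (auto intro: close_mono)
    qed
    thus ?thesis by blast
  qed
  thus ?thesis using r by auto
qed

lemma geometric_cauchy_limit:
  fixes g :: "nat \<Rightarrow> 'a::banach"
  assumes step: "\<And>j. norm (g (Suc j) - g j) \<le> C * (1/2)^j"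
  shows "\<exists>l. \<forall>j. norm (l - g j) \<le> 2 * C * (1/2)^j"
proof -
  define d where "d i = g (Suc i) - g i" for i
  have tail_sums: "(\<lambda>i. C * (1/2)^(i + j)) sums (2 * C * (1/2)^j)" for j
    using sums_mult[OF geometric_sums[of "1/2::real"], of "C * (1/2)^j"]
    by (simp add: power_add mult_ac)
  have norm_tail_summable: "summable (\<lambda>i. norm (d (i + j)))" for j
  proof (rule summable_comparison_test'[OF sums_summable[OF tail_sums[of j]]])
    show "norm (norm (d (i + j))) \<le> C * (1/2)^(i + j)" for i
      using step[of "i + j"] by (simp add: d_def)
  qed
  define l where "l = g 0 + suminf d"
  have "norm (l - g j) \<le> 2 * C * (1/2)^j" for j
  proof -
    have "suminf d = (\<Sum>i. d (i + j)) + (\<Sum>i<j. d i)"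
      using summable_norm_cancel[OF norm_tail_summable[of 0]]
      by (intro suminf_split_initial_segment) simp
    also have "(\<Sum>i<j. d i) = g j - g 0"
      unfolding d_def by (rule sum_lessThan_telescope)
    finally have "l - g j = (\<Sum>i. d (i + j))" unfolding l_def by (simp add: algebra_simps)
    hence "norm (l - g j) \<le> (\<Sum>i. norm (d (i + j)))"
      using summable_norm[OF norm_tail_summable] by simp
    also have "\<dots> \<le> (\<Sum>i. C * (1/2)^(i + j))"
    proof (rule suminf_le)
      show "norm (d (i + j)) \<le> C * (1/2)^(i + j)" for i
        using step[of "i + j"] by (simp add: d_def)
    qed (use norm_tail_summable sums_summable[OF tail_sums[of j]] in auto)
    also have "\<dots> = 2 * C * (1/2)^j" using tail_sums[of j] by (rule sums_unique[symmetric])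
    finally show ?thesis .
  qed
  thus ?thesis by blast
qed

text \<open>Composing the reindexing bijections \<open>\<pi>\<^sub>j\<close> into \<open>\<beta>\<^sub>j = \<pi>\<^sub>j\<^sub>-\<^sub>1 \<circ> \<dots> \<circ> \<pi>\<^sub>0\<close> turns every
  index \<open>n\<close> into a geometrically convergent sequence \<open>X j (\<beta> j n)\<close>, whose limit is \<open>c n\<close>.\<close>
lemma close_chain_limit:
  assumes "\<And>j. close ((1/2)^j) (X (Suc j)) (Y (Suc j)) (X j) (Y j)"
  shows "\<exists>c d. \<forall>j. close (2 * (1/2)^j) (X j) (Y j) c d"
proof -
  have "\<forall>j. \<exists>\<pi>. bij \<pi> \<and> (\<forall>n. cmod (X (Suc j) (\<pi> n) - X j n) \<le> (1/2)^j \<and>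
      cmod (Y (Suc j) (\<pi> n) - Y j n) \<le> (1/2)^j)"
    using assms unfolding close_def by blast
  then obtain \<pi> where \<pi>: "\<And>j. bij (\<pi> j) \<and> (\<forall>n. cmod (X (Suc j) (\<pi> j n) - X j n) \<le> (1/2)^j \<and>
      cmod (Y (Suc j) (\<pi> j n) - Y j n) \<le> (1/2)^j)"
    by (metis choice)
  hence \<pi>_bij: "\<And>j. bij (\<pi> j)"
    and \<pi>_X: "\<And>j n. cmod (X (Suc j) (\<pi> j n) - X j n) \<le> (1/2)^j"
    and \<pi>_Y: "\<And>j n. cmod (Y (Suc j) (\<pi> j n) - Y j n) \<le> (1/2)^j"
    by blast+
  define \<beta> where "\<beta> = rec_nat id (\<lambda>j \<beta>\<^sub>j. \<pi> j \<circ> \<beta>\<^sub>j)"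
  have \<beta>_0: "\<beta> 0 = id" and \<beta>_Suc: "\<beta> (Suc j) = \<pi> j \<circ> \<beta> j" for j
    unfolding \<beta>_def by simp_all
  have \<beta>_bij: "bij (\<beta> j)" for j
  proof (induction j)
    case 0 show ?case unfolding \<beta>_0 by (rule bij_id)
  next
    case (Suc j) show ?case unfolding \<beta>_Suc by (rule bij_comp[OF Suc.IH \<pi>_bij])
  qed
  have column_limit: "\<exists>l. \<forall>j. cmod (l - F j (\<beta> j n)) \<le> 2 * (1/2)^j"
    if "\<And>j m. cmod (F (Suc j) (\<pi> j m) - F j m) \<le> (1/2)^j" for F :: "nat \<Rightarrow> nat \<Rightarrow> complex" and n
  proof -
    have "\<exists>l. \<forall>j. cmod (l - F j (\<beta> j n)) \<le> 2 * 1 * (1/2)^j"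
      by (rule geometric_cauchy_limit) (simp add: \<beta>_Suc that)
    thus ?thesis by simp
  qed
  have "\<forall>n. \<exists>l. \<forall>j. cmod (l - X j (\<beta> j n)) \<le> 2 * (1/2)^j"
    using column_limit[OF \<pi>_X] by blast
  then obtain c where c: "\<And>n j. cmod (c n - X j (\<beta> j n)) \<le> 2 * (1/2)^j"
    by (metis choice)
  have "\<forall>n. \<exists>l. \<forall>j. cmod (l - Y j (\<beta> j n)) \<le> 2 * (1/2)^j"
    using column_limit[OF \<pi>_Y] by blast
  then obtain d where d: "\<And>n j. cmod (d n - Y j (\<beta> j n)) \<le> 2 * (1/2)^j"
    by (metis choice)
  have "close (2 * (1/2)^j) (X j) (Y j) c d" for j
    unfolding close_def using \<beta>_bij c d by (intro exI[of _ "\<beta> j"]) (simp add: norm_minus_commute)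
  thus ?thesis by blast
qed

text \<open>Pass to indices \<open>K j\<close> beyond which all terms are \<open>2\<^sup>-\<^sup>j\<close>-close and apply the chain
  lemma.\<close>
lemma close_cauchy_limit:
  fixes A B :: "nat \<Rightarrow> nat \<Rightarrow> complex"
  assumes cauchy: "\<And>\<epsilon>. \<epsilon> > 0 \<Longrightarrow> \<exists>N. \<forall>k\<ge>N. \<forall>l\<ge>N. close \<epsilon> (A k) (B k) (A l) (B l)"
  shows "\<exists>c d. \<forall>\<epsilon>>0. eventually (\<lambda>k. close \<epsilon> (A k) (B k) c d) sequentially"
proof -
  have "\<forall>j. \<exists>N. \<forall>k\<ge>N. \<forall>l\<ge>N. close ((1/2)^j) (A k) (B k) (A l) (B l)"
    using cauchy by simp
  then obtain N where N: "\<And>j k l. k \<ge> N j \<Longrightarrow> l \<ge> N j \<Longrightarrow> close ((1/2)^j) (A k) (B k) (A l) (B l)"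
    by metis
  define K where "K j = (\<Sum>i\<le>j. N i)" for j
  have N_le_K: "N j \<le> K j" for j unfolding K_def by (rule member_le_sum) auto
  have K_mono: "K j \<le> K (Suc j)" for j unfolding K_def by simp
  have chain: "close ((1/2)^j) (A (K (Suc j))) (B (K (Suc j))) (A (K j)) (B (K j))" for j
    using N N_le_K K_mono order_trans by blast
  obtain c d where cd: "\<And>j. close (2 * (1/2)^j) (A (K j)) (B (K j)) c d"
    using close_chain_limit[of "\<lambda>j. A (K j)" "\<lambda>j. B (K j)", OF chain] by blast
  have "eventually (\<lambda>k. close \<epsilon> (A k) (B k) c d) sequentially" if pos: "\<epsilon> > 0" for \<epsilon>
  proof -
    obtain j where j: "(1/2::real)^j < \<epsilon>/3" using real_arch_pow_inv[of "\<epsilon>/3" "1/2"] pos by auto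
    have "close \<epsilon> (A k) (B k) c d" if "k \<ge> K j" for k
    proof -
      have "close ((1/2)^j + 2 * (1/2)^j) (A k) (B k) c d"
        using close_trans[OF N[OF _ N_le_K] cd] that N_le_K order_trans by blast
      thus ?thesis using j by (auto intro: close_mono)
    qed
    thus ?thesis unfolding eventually_sequentially by blast
  qed
  thus ?thesis by blast
qed

lemma ap_regular_divisor_limit:
  assumes ap: "ap_regular_divisor a b"
    and approx: "\<And>\<epsilon>. \<epsilon> > 0 \<Longrightarrow> \<exists>t. close \<epsilon> (shift a t) (shift b t) c d"
  shows "ap_regular_divisor c d"
  unfolding ap_regular_divisor_close
proof (intro conjI allI impI)
  show "divisor c d"
    using ap approx[of 1] divisor_close_shift unfolding ap_regular_divisor_def by force
  fix \<epsilon> :: real assume "\<epsilon> > 0"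
  then obtain L where L: "\<And>z. \<exists>\<tau>. dist \<tau> z < L \<and> close (\<epsilon>/3) a b (shift a \<tau>) (shift b \<tau>)"
    using ap unfolding ap_regular_divisor_close by (meson divide_pos_pos zero_less_numeral)
  obtain t where t: "close (\<epsilon>/3) (shift a t) (shift b t) c d"
    using approx[of "\<epsilon>/3"] \<open>\<epsilon> > 0\<close> by auto
  have "\<exists>\<tau>. dist \<tau> z < L \<and> close \<epsilon> c d (shift c \<tau>) (shift d \<tau>)" for z
  proof -
    obtain \<tau> where \<tau>: "dist \<tau> z < L" "close (\<epsilon>/3) a b (shift a \<tau>) (shift b \<tau>)"
      using L by blast
    text \<open>Go from \<open>c\<close> back to the translate by \<open>t\<close>, move by the almost period \<open>\<tau>\<close>,
      and come back to \<open>c\<close> translated by \<open>\<tau>\<close>.\<close>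
    have "close (\<epsilon>/3) c d (shift a t) (shift b t)" using close_sym[OF t] .
    moreover have "close (\<epsilon>/3) (shift a t) (shift b t) (shift (shift a t) \<tau>) (shift (shift b t) \<tau>)"
      using close_shift[OF \<tau>(2), of t] by (simp add: add.commute)
    moreover have "close (\<epsilon>/3) (shift (shift a t) \<tau>) (shift (shift b t) \<tau>) (shift c \<tau>) (shift d \<tau>)"
      using close_shift[OF t] .
    ultimately have "close (\<epsilon>/3 + \<epsilon>/3 + \<epsilon>/3) c d (shift c \<tau>) (shift d \<tau>)"
      by (meson close_trans)
    thus ?thesis using \<tau>(1) by auto
  qed
  thus "\<exists>L. \<forall>z. \<exists>\<tau>. dist \<tau> z < L \<and> close \<epsilon> c d (shift c \<tau>) (shift d \<tau>)" by blast
qed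

text \<open>If for every \<open>\<epsilon>\<close> eventually some witness has quality \<open>\<epsilon>\<close>, then one sequence of witnesses
  works for all \<open>\<epsilon>\<close> simultaneously: at step \<open>k\<close> take a witness for the best precision
  \<open>1/(m+1)\<close>, \<open>m \<le> k\<close>, available there.\<close>
lemma eventually_choice_uniform:
  assumes mono: "\<And>k x \<epsilon> \<epsilon>'. P k x \<epsilon> \<Longrightarrow> \<epsilon> \<le> \<epsilon>' \<Longrightarrow> P k x \<epsilon>'"
    and ev: "\<And>\<epsilon>::real. \<epsilon> > 0 \<Longrightarrow> eventually (\<lambda>k. \<exists>x. P k x \<epsilon>) sequentially"
  shows "\<exists>x. \<forall>\<epsilon>>0. eventually (\<lambda>k. P k (x k) \<epsilon>) sequentially"
proof -
  define M where "M k = Max {m. m \<le> k \<and> (\<exists>x. P k x (1 / real (Suc m)))}" for k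
  define x where "x k = (SOME x. P k x (1 / real (Suc (M k))))" for k
  have "eventually (\<lambda>k. P k (x k) \<epsilon>) sequentially" if "\<epsilon> > 0" for \<epsilon>
  proof -
    obtain m0 where m0: "1 / real (Suc m0) < \<epsilon>"
      using reals_Archimedean[OF \<open>\<epsilon> > 0\<close>] by (auto simp: inverse_eq_divide)
    have "eventually (\<lambda>k. (\<exists>x. P k x (1 / real (Suc m0))) \<and> k \<ge> m0) sequentially"
      using ev[of "1 / real (Suc m0)"] eventually_ge_at_top[of m0] by (auto intro: eventually_conj)
    thus ?thesis
    proof (rule eventually_mono)
      fix k assume k: "(\<exists>x. P k x (1 / real (Suc m0))) \<and> k \<ge> m0"
      let ?A = "{m. m \<le> k \<and> (\<exists>x. P k x (1 / real (Suc m)))}"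
      have "finite ?A" by (rule finite_subset[of _ "{..k}"]) auto
      moreover have "m0 \<in> ?A" using k by auto
      ultimately have "M k \<in> ?A" "m0 \<le> M k" unfolding M_def using Max_in Max_ge by blast+
      hence "P k (x k) (1 / real (Suc (M k)))" unfolding x_def by (auto intro: someI_ex)
      moreover have "1 / real (Suc (M k)) \<le> 1 / real (Suc m0)"
        using \<open>m0 \<le> M k\<close> by (intro divide_left_mono) auto
      ultimately show "P k (x k) \<epsilon>" using m0 by (auto intro: mono)
    qed
  qed
  thus ?thesis by blast
qed

lemma close_limit_bijections:
  assumes "\<And>\<epsilon>. \<epsilon> > 0 \<Longrightarrow> eventually (\<lambda>k. close \<epsilon> (A k) (B k) c d) sequentially"
  shows "\<exists>\<sigma>. (\<forall>k. bij (\<sigma> k)) \<and> (\<forall>\<epsilon>>0. \<forall>\<^sub>F k in sequentially.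
            \<forall>n. cmod (A k (\<sigma> k n) - c n) \<le> \<epsilon> \<and> cmod (B k (\<sigma> k n) - d n) \<le> \<epsilon>)"
proof -
  define P where "P k \<alpha> \<epsilon> \<longleftrightarrow> bij \<alpha> \<and>
      (\<forall>n. cmod (A k (\<alpha> n) - c n) \<le> \<epsilon> \<and> cmod (B k (\<alpha> n) - d n) \<le> \<epsilon>)" for k \<alpha> \<epsilon>
  have "\<exists>\<sigma>. \<forall>\<epsilon>>0. eventually (\<lambda>k. P k (\<sigma> k) \<epsilon>) sequentially"
    using assms by (intro eventually_choice_uniform) (auto simp: P_def close_def intro: order_trans)
  then obtain \<sigma> where \<sigma>: "\<And>\<epsilon>. \<epsilon> > 0 \<Longrightarrow> eventually (\<lambda>k. P k (\<sigma> k) \<epsilon>) sequentially" by blast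
  text \<open>Only eventually is \<open>\<sigma> k\<close> known to be bijective; replace the finitely many others by \<open>id\<close>.\<close>
  define \<sigma>' where "\<sigma>' k = (if bij (\<sigma> k) then \<sigma> k else id)" for k
  have "eventually (\<lambda>k. \<forall>n. cmod (A k (\<sigma>' k n) - c n) \<le> \<epsilon> \<and> cmod (B k (\<sigma>' k n) - d n) \<le> \<epsilon>)
      sequentially" if "\<epsilon> > 0" for \<epsilon>
    using \<sigma>[OF that] by (rule eventually_mono) (simp add: P_def \<sigma>'_def)
  moreover have "bij (\<sigma>' k)" for k by (simp add: \<sigma>'_def)
  ultimately show ?thesis by blast
qed

theorem mainTheorem10:
  fixes a b :: "nat \<Rightarrow> complex"
  assumes "ap_regular_divisor a b"
  shows "\<forall>h :: nat \<Rightarrow> complex. \<exists>r :: nat \<Rightarrow> nat. strict_mono r \<and>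
    (\<exists>ta tb :: nat \<Rightarrow> complex. ap_regular_divisor ta tb \<and>
      (\<exists>\<sigma> :: nat \<Rightarrow> nat \<Rightarrow> nat. (\<forall>k. bij (\<sigma> k)) \<and>
        (\<forall>\<epsilon>>0. \<forall>\<^sub>F k in sequentially.
            \<forall>n. cmod (a (\<sigma> k n) + h (r k) - ta n) \<le> \<epsilon> \<and>
                cmod (b (\<sigma> k n) + h (r k) - tb n) \<le> \<epsilon>)))"
proof
  fix h :: "nat \<Rightarrow> complex"
  obtain r :: "nat \<Rightarrow> nat" where r: "strict_mono r" and cauchy: "\<forall>\<epsilon>>0. \<exists>N. \<forall>k\<ge>N. \<forall>l\<ge>N.
      close \<epsilon> (shift a (h (r k))) (shift b (h (r k))) (shift a (h (r l))) (shift b (h (r l)))"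
    using translates_cauchy_subseq[OF assms, of h] by blast
  obtain ta tb where lim: "\<forall>\<epsilon>>0.
      eventually (\<lambda>k. close \<epsilon> (shift a (h (r k))) (shift b (h (r k))) ta tb) sequentially"
    using close_cauchy_limit[OF cauchy[rule_format]] by blast
  have "ap_regular_divisor ta tb"
  proof (rule ap_regular_divisor_limit[OF assms])
    fix \<epsilon> :: real assume "\<epsilon> > 0"
    then obtain N where "\<forall>k\<ge>N. close \<epsilon> (shift a (h (r k))) (shift b (h (r k))) ta tb"
      using lim unfolding eventually_sequentially by blast
    thus "\<exists>t. close \<epsilon> (shift a t) (shift b t) ta tb" by blast
  qed
  moreover obtain \<sigma> where "\<forall>k. bij (\<sigma> k)" "\<forall>\<epsilon>>0. \<forall>\<^sub>F k in sequentially.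
      \<forall>n. cmod (a (\<sigma> k n) + h (r k) - ta n) \<le> \<epsilon> \<and> cmod (b (\<sigma> k n) + h (r k) - tb n) \<le> \<epsilon>"
    using close_limit_bijections[OF lim[rule_format]] by (auto simp only: shift_apply)
  ultimately show "\<exists>r. strict_mono r \<and> (\<exists>ta tb. ap_regular_divisor ta tb \<and> (\<exists>\<sigma>. (\<forall>k. bij (\<sigma> k)) \<and>
        (\<forall>\<epsilon>>0. \<forall>\<^sub>F k in sequentially. \<forall>n. cmod (a (\<sigma> k n) + h (r k) - ta n) \<le> \<epsilon> \<and>
                cmod (b (\<sigma> k n) + h (r k) - tb n) \<le> \<epsilon>)))"
    using r by blast
qed

end
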